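(* Let $L'$ be a superintuitionistic logic with $\mathsf{Box}\subsetneq L'$ which is not of finite depth. Then there is some $n$ such that every finite rooted frame of $L'$ has stack-depth at most $n$.
   Context: $\mathsf{Box}=\mathsf{wPL}\oplus\mathsf{bw}_2\oplus(\neg p\vee\neg\neg p)$, where $\mathsf{wPL}=\mathsf{IPC}\oplus(q\to p)\vee(((p\to q)\to p)\to p)$ and $\mathsf{bw}_2=\bigvee_{i=0}^2(p_i\to\bigvee_{j\ne i}p_j)$. Finite rooted frames of $\mathsf{wPL}$ are Boolean sums: finite rooted posets where (1) each immediate successor of $x$ has depth $d(x)-1$, (2) each point of depth $k+1$ is below all points of depth $k$ (depth of $x$: length of the longest chain starting at $x$; maximal points have depth $1$). For a Boolean sum, a $k$-stack is a run of $k$ consecutive depths each containing more than one point; the stack-depth is the largest $k$ for which a $k$-stack exists. $L$ is of finite depth if $L\supseteq\mathsf{IPC}\oplus\mathsf{bd}_m$ for some $m$, where $\mathsf{bd}_0=p_0$, $\mathsf{bd}_{m+1}=p_{m+1}\vee(p_{m+1}\to\mathsf{bd}_m)$. *)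

theory Defs
  imports Main
begin

datatype fm = Var nat | Bot | Conj fm fm | Disj fm fm | Imp fm fm

definition Neg :: "fm \<Rightarrow> fm" where "Neg A = Imp A Bot"

primrec subst :: "(nat \<Rightarrow> fm) \<Rightarrow> fm \<Rightarrow> fm" where
  "subst s (Var n) = s n"
| "subst s Bot = Bot"
| "subst s (Conj A B) = Conj (subst s A) (subst s B)"
| "subst s (Disj A B) = Disj (subst s A) (subst s B)"
| "subst s (Imp A B) = Imp (subst s A) (subst s B)"

inductive_set IPC :: "fm set" where
  ax1: "Imp A (Imp B A) \<in> IPC"
| ax2: "Imp (Imp A (Imp B C)) (Imp (Imp A B) (Imp A C)) \<in> IPC"
| ax3: "Imp (Conj A B) A \<in> IPC"
| ax4: "Imp (Conj A B) B \<in> IPC"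
| ax5: "Imp A (Imp B (Conj A B)) \<in> IPC"
| ax6: "Imp A (Disj A B) \<in> IPC"
| ax7: "Imp B (Disj A B) \<in> IPC"
| ax8: "Imp (Imp A C) (Imp (Imp B C) (Imp (Disj A B) C)) \<in> IPC"
| ax9: "Imp Bot A \<in> IPC"
| mp: "A \<in> IPC \<Longrightarrow> Imp A B \<in> IPC \<Longrightarrow> B \<in> IPC"

definition si_logic :: "fm set \<Rightarrow> bool" where
  "si_logic L \<longleftrightarrow> IPC \<subseteq> L
     \<and> (\<forall>A B. A \<in> L \<longrightarrow> Imp A B \<in> L \<longrightarrow> B \<in> L)
     \<and> (\<forall>s A. A \<in> L \<longrightarrow> subst s A \<in> L)"

inductive_set ext :: "fm set \<Rightarrow> fm set \<Rightarrow> fm set" for L \<Gamma> where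
  ipc: "A \<in> IPC \<Longrightarrow> A \<in> ext L \<Gamma>"
| base: "A \<in> L \<Longrightarrow> A \<in> ext L \<Gamma>"
| new: "A \<in> \<Gamma> \<Longrightarrow> A \<in> ext L \<Gamma>"
| mp: "A \<in> ext L \<Gamma> \<Longrightarrow> Imp A B \<in> ext L \<Gamma> \<Longrightarrow> B \<in> ext L \<Gamma>"
| sub: "A \<in> ext L \<Gamma> \<Longrightarrow> subst s A \<in> ext L \<Gamma>"

definition wPL_ax :: fm where
  "wPL_ax = (let p = Var 0; q = Var 1 in
     Disj (Imp q p) (Imp (Imp (Imp p q) p) p))"

definition wPL :: "fm set" where "wPL = ext IPC {wPL_ax}"

definition bw2 :: fm where
  "bw2 = Disj (Imp (Var 0) (Disj (Var 1) (Var 2)))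
          (Disj (Imp (Var 1) (Disj (Var 0) (Var 2)))
                (Imp (Var 2) (Disj (Var 0) (Var 1))))"

definition wem :: fm where "wem = Disj (Neg (Var 0)) (Neg (Neg (Var 0)))"

definition Box :: "fm set" where "Box = ext (ext wPL {bw2}) {wem}"

fun bd :: "nat \<Rightarrow> fm" where
  "bd 0 = Var 0"
| "bd (Suc m) = Disj (Var (Suc m)) (Imp (Var (Suc m)) (bd m))"

definition finite_depth :: "fm set \<Rightarrow> bool" where
  "finite_depth L \<longleftrightarrow> (\<exists>m. ext IPC {bd m} \<subseteq> L)"

text \<open>Frames are given by a carrier W and a relation R (used only on W).\<close>

definition upset :: "nat set \<Rightarrow> (nat \<Rightarrow> nat \<Rightarrow> bool) \<Rightarrow> nat set \<Rightarrow> bool" where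
  "upset W R U \<longleftrightarrow> U \<subseteq> W \<and> (\<forall>x\<in>U. \<forall>y\<in>W. R x y \<longrightarrow> y \<in> U)"

fun sat :: "nat set \<Rightarrow> (nat \<Rightarrow> nat \<Rightarrow> bool) \<Rightarrow> (nat \<Rightarrow> nat set) \<Rightarrow> nat \<Rightarrow> fm \<Rightarrow> bool" where
  "sat W R V x (Var n) = (x \<in> V n)"
| "sat W R V x Bot = False"
| "sat W R V x (Conj A B) = (sat W R V x A \<and> sat W R V x B)"
| "sat W R V x (Disj A B) = (sat W R V x A \<or> sat W R V x B)"
| "sat W R V x (Imp A B) =
     (\<forall>y\<in>W. R x y \<longrightarrow> sat W R V y A \<longrightarrow> sat W R V y B)"

definition valid_in :: "nat set \<Rightarrow> (nat \<Rightarrow> nat \<Rightarrow> bool) \<Rightarrow> fm \<Rightarrow> bool" where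
  "valid_in W R A \<longleftrightarrow>
     (\<forall>V. (\<forall>n. upset W R (V n)) \<longrightarrow> (\<forall>x\<in>W. sat W R V x A))"

definition finite_rooted_frame :: "nat set \<Rightarrow> (nat \<Rightarrow> nat \<Rightarrow> bool) \<Rightarrow> bool" where
  "finite_rooted_frame W R \<longleftrightarrow> finite W \<and> W \<noteq> {}
     \<and> (\<forall>x\<in>W. R x x)
     \<and> (\<forall>x\<in>W. \<forall>y\<in>W. \<forall>z\<in>W. R x y \<longrightarrow> R y z \<longrightarrow> R x z)
     \<and> (\<forall>x\<in>W. \<forall>y\<in>W. R x y \<longrightarrow> R y x \<longrightarrow> x = y)
     \<and> (\<exists>r\<in>W. \<forall>x\<in>W. R r x)"

definition frame_of :: "fm set \<Rightarrow> nat set \<Rightarrow> (nat \<Rightarrow> nat \<Rightarrow> bool) \<Rightarrow> bool" where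
  "frame_of L W R \<longleftrightarrow> finite_rooted_frame W R \<and> (\<forall>A\<in>L. valid_in W R A)"

definition strict_chain :: "nat set \<Rightarrow> (nat \<Rightarrow> nat \<Rightarrow> bool) \<Rightarrow> nat list \<Rightarrow> bool" where
  "strict_chain W R xs \<longleftrightarrow> set xs \<subseteq> W
     \<and> (\<forall>i. Suc i < length xs \<longrightarrow> R (xs ! i) (xs ! Suc i) \<and> xs ! i \<noteq> xs ! Suc i)"

text \<open>Depth of x: length of the longest chain starting at x (maximal points: depth 1).\<close>
definition depth :: "nat set \<Rightarrow> (nat \<Rightarrow> nat \<Rightarrow> bool) \<Rightarrow> nat \<Rightarrow> nat" where
  "depth W R x = Max {length xs | xs. xs \<noteq> [] \<and> hd xs = x \<and> strict_chain W R xs}"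

definition k_stack :: "nat set \<Rightarrow> (nat \<Rightarrow> nat \<Rightarrow> bool) \<Rightarrow> nat \<Rightarrow> bool" where
  "k_stack W R k \<longleftrightarrow> (\<exists>d. \<forall>i<k. card {x\<in>W. depth W R x = d + i} > 1)"

definition stack_depth_le :: "nat set \<Rightarrow> (nat \<Rightarrow> nat \<Rightarrow> bool) \<Rightarrow> nat \<Rightarrow> bool" where
  "stack_depth_le W R n \<longleftrightarrow> (\<forall>k. k_stack W R k \<longrightarrow> k \<le> n)"

end

theory Submission
  imports Defs
begin

text \<open>Pick \<open>\<phi> \<in> L' - Box\<close>. In the canonical model of Box, let \<open>G\<close> be a maximal theory
  omitting \<open>\<phi>\<close>. The prime theories reached from \<open>G\<close> by finitely many witness steps for
  implications among the subformulas of \<open>\<phi>\<close>, together with the maximal consistent theory above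
  \<open>G\<close> (unique by weak excluded middle), form a finite rooted poset \<open>X\<close> that refutes \<open>\<phi>\<close>
  at \<open>G\<close>. The axioms wPL and bw2 force \<open>X\<close>, and every finite rooted frame of Box, to satisfy
  \<open>a \<le> c \<or> b \<le> a \<or> c \<le> b\<close>: a point sees everything of smaller depth and each depth has at
  most two points. So if a frame of \<open>L'\<close> had a stack as long as the depth \<open>m\<close> of \<open>G\<close> in
  \<open>X\<close>, the cone of a point at its \<open>m\<close>-th level would map p-morphically onto \<open>X\<close>, depth by
  depth, and \<open>\<phi> \<in> L'\<close> would fail in the frame. Hence every stack is shorter than \<open>m\<close>.\<close>

section \<open>Theories over Box\<close>

lemma IPC_subset_Box: "IPC \<subseteq> Box"
  unfolding Box_def by (auto intro: ext.ipc)

lemma wPL_instance_in_Box: "Disj (Imp Q P) (Imp (Imp (Imp P Q) P) P) \<in> Box"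
proof -
  have "wPL_ax \<in> wPL" unfolding wPL_def by (rule ext.new) simp
  then have "subst (\<lambda>n. if n = 0 then P else Q) wPL_ax \<in> wPL" unfolding wPL_def by (rule ext.sub)
  then show ?thesis unfolding Box_def wPL_ax_def Let_def by (auto intro: ext.base)
qed

lemma bw2_instance_in_Box:
  "Disj (Imp A (Disj B C)) (Disj (Imp B (Disj A C)) (Imp C (Disj A B))) \<in> Box"
proof -
  have "bw2 \<in> ext wPL {bw2}" by (rule ext.new) simp
  then have "subst (\<lambda>n. if n = 0 then A else if n = 1 then B else C) bw2 \<in> ext wPL {bw2}"
    by (rule ext.sub)
  then show ?thesis unfolding Box_def bw2_def by (auto intro: ext.base)
qed

lemma wem_instance_in_Box: "Disj (Imp A Bot) (Imp (Imp A Bot) Bot) \<in> Box"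
proof -
  have "wem \<in> Box" unfolding Box_def by (rule ext.new) simp
  then have "subst (\<lambda>n. A) wem \<in> Box" unfolding Box_def by (rule ext.sub)
  then show ?thesis unfolding wem_def Neg_def by simp
qed

definition Box_theory :: "fm set \<Rightarrow> bool" where
  "Box_theory D \<longleftrightarrow> Box \<subseteq> D \<and> (\<forall>A B. A \<in> D \<longrightarrow> Imp A B \<in> D \<longrightarrow> B \<in> D)"

definition prime_theory :: "fm set \<Rightarrow> bool" where
  "prime_theory D \<longleftrightarrow> Box_theory D \<and> Bot \<notin> D \<and> (\<forall>A B. Disj A B \<in> D \<longrightarrow> A \<in> D \<or> B \<in> D)"

definition maximal_omitting :: "fm \<Rightarrow> fm set \<Rightarrow> bool" where
  "maximal_omitting B D \<longleftrightarrow> Box_theory D \<and> B \<notin> D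
     \<and> (\<forall>D'. Box_theory D' \<longrightarrow> D \<subseteq> D' \<longrightarrow> B \<notin> D' \<longrightarrow> D' = D)"

inductive_set Box_closure :: "fm set \<Rightarrow> fm set" for S where
  hyp: "A \<in> S \<Longrightarrow> A \<in> Box_closure S"
| Box: "A \<in> Box \<Longrightarrow> A \<in> Box_closure S"
| mp: "A \<in> Box_closure S \<Longrightarrow> Imp A B \<in> Box_closure S \<Longrightarrow> B \<in> Box_closure S"

lemma Box_theory_Box: "Box_theory Box"
  unfolding Box_theory_def Box_def by (auto intro: ext.mp)

lemma Box_theory_Box_closure: "Box_theory (Box_closure S)"
  unfolding Box_theory_def by (auto intro: Box_closure.intros)

lemma Box_theory_mp: "Box_theory D \<Longrightarrow> A \<in> D \<Longrightarrow> Imp A B \<in> D \<Longrightarrow> B \<in> D"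
  unfolding Box_theory_def by blast

lemma Box_theory_IPC: "Box_theory D \<Longrightarrow> A \<in> IPC \<Longrightarrow> A \<in> D"
  using IPC_subset_Box unfolding Box_theory_def by blast

lemma IPC_Imp_self: "Imp A A \<in> IPC"
  using IPC.mp[OF IPC.ax1 IPC.mp[OF IPC.ax1 IPC.ax2]] .

lemma deduction_theorem:
  assumes D: "Box_theory D" and A: "A \<in> Box_closure (insert B D)"
  shows "Imp B A \<in> D"
  using A
proof (induction rule: Box_closure.induct)
  case (hyp A)
  then show ?case
    using Box_theory_IPC[OF D] Box_theory_mp[OF D] IPC_Imp_self IPC.ax1 by blast
next
  case (Box A)
  then show ?case
    using Box_theory_IPC[OF D] Box_theory_mp[OF D] IPC.ax1 D unfolding Box_theory_def by blast
next
  case (mp A C)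
  then show ?case
    using Box_theory_mp[OF D _ Box_theory_mp[OF D _ Box_theory_IPC[OF D IPC.ax2]]] by blast
qed

lemma Box_theory_Union_chain:
  assumes "C \<noteq> {}" "\<forall>D\<in>C. Box_theory D" "chain\<^sub>\<subseteq> C"
  shows "Box_theory (\<Union>C)"
  unfolding Box_theory_def
proof (intro conjI allI impI)
  show "Box \<subseteq> \<Union>C" using assms(1,2) unfolding Box_theory_def by blast
next
  fix A B assume "A \<in> \<Union>C" "Imp A B \<in> \<Union>C"
  then obtain D D' where "D \<in> C" "A \<in> D" "D' \<in> C" "Imp A B \<in> D'" by blast
  with assms(2,3) have "A \<in> D' \<and> Imp A B \<in> D' \<or> A \<in> D \<and> Imp A B \<in> D"
    unfolding chain_subset_def by blast
  with \<open>D \<in> C\<close> \<open>D' \<in> C\<close> assms(2) show "B \<in> \<Union>C"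
    using Box_theory_mp by blast
qed

lemma Lindenbaum:
  assumes "Box_theory G" "B \<notin> G"
  obtains D where "maximal_omitting B D" "G \<subseteq> D"
proof -
  let ?T = "{D. Box_theory D \<and> G \<subseteq> D \<and> B \<notin> D}"
  have "\<forall>C\<in>chains ?T. \<exists>U\<in>?T. \<forall>D\<in>C. D \<subseteq> U"
  proof
    fix C assume C: "C \<in> chains ?T"
    show "\<exists>U\<in>?T. \<forall>D\<in>C. D \<subseteq> U"
    proof (cases "C = {}")
      case True
      then show ?thesis using assms by blast
    next
      case False
      have "C \<subseteq> ?T" "chain\<^sub>\<subseteq> C" using C unfolding chains_def by simp_all
      then have "\<Union>C \<in> ?T"
        using Box_theory_Union_chain[OF False] False by blast
      then show ?thesis by blast
    qed
  qed
  from Zorn_Lemma2[OF this] obtain D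
    where D: "D \<in> ?T" "\<forall>D'\<in>?T. D \<subseteq> D' \<longrightarrow> D' = D" by blast
  show thesis
  proof
    show "maximal_omitting B D" unfolding maximal_omitting_def using D by blast
    show "G \<subseteq> D" using D by blast
  qed
qed

lemma maximal_omitting_prime:
  assumes M: "maximal_omitting B D"
  shows "prime_theory D"
proof -
  have D: "Box_theory D" and B: "B \<notin> D"
    and max: "\<And>D'. Box_theory D' \<Longrightarrow> D \<subseteq> D' \<Longrightarrow> B \<notin> D' \<Longrightarrow> D' = D"
    using M unfolding maximal_omitting_def by auto
  have Imp_B: "Imp C B \<in> D" if "C \<notin> D" for C
  proof (rule ccontr)
    assume "Imp C B \<notin> D"
    then have "B \<notin> Box_closure (insert C D)" using deduction_theorem[OF D] by blast
    then have "Box_closure (insert C D) = D"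
      using max[OF Box_theory_Box_closure] Box_closure.hyp by blast
    with that show False using Box_closure.hyp by blast
  qed
  have "Bot \<notin> D" using B Box_theory_mp[OF D _ Box_theory_IPC[OF D IPC.ax9]] by blast
  moreover have "A \<in> D \<or> A' \<in> D" if "Disj A A' \<in> D" for A A'
  proof (rule ccontr)
    assume "\<not> (A \<in> D \<or> A' \<in> D)"
    then have "Imp A B \<in> D" "Imp A' B \<in> D" using Imp_B by auto
    then have "B \<in> D"
      using that Box_theory_mp[OF D] Box_theory_IPC[OF D IPC.ax8[of A B A']] by blast
    with B show False ..
  qed
  ultimately show ?thesis
    unfolding prime_theory_def using D by blast
qed

lemma prime_theory_Box_theory: "prime_theory D \<Longrightarrow> Box_theory D"
  unfolding prime_theory_def by blast

lemma prime_theory_Bot: "prime_theory D \<Longrightarrow> Bot \<notin> D"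
  unfolding prime_theory_def by blast

lemma prime_theory_Conj: "prime_theory D \<Longrightarrow> Conj A B \<in> D \<longleftrightarrow> A \<in> D \<and> B \<in> D"
  using Box_theory_mp[of D] Box_theory_IPC[of D] IPC.ax3 IPC.ax4 IPC.ax5 prime_theory_Box_theory
  by metis

lemma prime_theory_Disj: "prime_theory D \<Longrightarrow> Disj A B \<in> D \<longleftrightarrow> A \<in> D \<or> B \<in> D"
  using Box_theory_mp[of D] Box_theory_IPC[of D] IPC.ax6 IPC.ax7
  unfolding prime_theory_def by metis

lemma ex_prime_witness:
  assumes "Box_theory D" "Imp A B \<notin> D"
  obtains D' where "prime_theory D'" "D \<subseteq> D'" "A \<in> D'" "B \<notin> D'"
proof -
  have "B \<notin> Box_closure (insert A D)" using deduction_theorem assms by blast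
  then obtain D' where D': "maximal_omitting B D'" "Box_closure (insert A D) \<subseteq> D'"
    using Lindenbaum[OF Box_theory_Box_closure] by blast
  show thesis
  proof
    show "prime_theory D'" using maximal_omitting_prime[OF D'(1)] .
    show "D \<subseteq> D'" "A \<in> D'" using D'(2) Box_closure.hyp by blast+
    show "B \<notin> D'" using D'(1) unfolding maximal_omitting_def by blast
  qed
qed

lemma prime_theory_Imp:
  assumes "prime_theory D"
  shows "Imp A B \<in> D \<longleftrightarrow> (\<forall>D'. prime_theory D' \<longrightarrow> D \<subseteq> D' \<longrightarrow> A \<in> D' \<longrightarrow> B \<in> D')"
proof
  assume "Imp A B \<in> D"
  then show "\<forall>D'. prime_theory D' \<longrightarrow> D \<subseteq> D' \<longrightarrow> A \<in> D' \<longrightarrow> B \<in> D'"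
    using Box_theory_mp prime_theory_Box_theory by blast
next
  assume "\<forall>D'. prime_theory D' \<longrightarrow> D \<subseteq> D' \<longrightarrow> A \<in> D' \<longrightarrow> B \<in> D'"
  then show "Imp A B \<in> D"
    using ex_prime_witness[OF prime_theory_Box_theory[OF assms]] by metis
qed

section \<open>Kripke models and the frame condition of wPL and bw2\<close>

text \<open>On finite posets this condition gives the Boolean-sum shape with at most two points per
  depth (\<open>cyclic_below_shallower\<close>, \<open>cyclic_level_card\<close>).\<close>

definition cyclic :: "'a set \<Rightarrow> ('a \<Rightarrow> 'a \<Rightarrow> bool) \<Rightarrow> bool" where
  "cyclic W R \<longleftrightarrow> (\<forall>a\<in>W. \<forall>b\<in>W. \<forall>c\<in>W. R a c \<or> R b a \<or> R c b)"

locale kripke_model =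
  fixes K :: "'w set" and le :: "'w \<Rightarrow> 'w \<Rightarrow> bool" and T :: "'w \<Rightarrow> fm \<Rightarrow> bool"
  assumes T_Conj: "w \<in> K \<Longrightarrow> T w (Conj A B) \<longleftrightarrow> T w A \<and> T w B"
    and T_Disj: "w \<in> K \<Longrightarrow> T w (Disj A B) \<longleftrightarrow> T w A \<or> T w B"
    and T_Imp: "w \<in> K \<Longrightarrow> T w (Imp A B) \<longleftrightarrow> (\<forall>u\<in>K. le w u \<longrightarrow> T u A \<longrightarrow> T u B)"
    and refl: "w \<in> K \<Longrightarrow> le w w"
    and trans: "w \<in> K \<Longrightarrow> u \<in> K \<Longrightarrow> v \<in> K \<Longrightarrow> le w u \<Longrightarrow> le u v \<Longrightarrow> le w v"
    and persistent: "w \<in> K \<Longrightarrow> u \<in> K \<Longrightarrow> le w u \<Longrightarrow> T w A \<Longrightarrow> T u A"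
    and maximal_refutation: "w \<in> K \<Longrightarrow> \<not> T w A
       \<Longrightarrow> \<exists>v\<in>K. le w v \<and> \<not> T v A \<and> (\<forall>u\<in>K. le v u \<longrightarrow> \<not> T u A \<longrightarrow> u = v)"
begin

lemma T_mp: "w \<in> K \<Longrightarrow> T w (Imp A B) \<Longrightarrow> T w A \<Longrightarrow> T w B"
  using T_Imp refl by blast

lemma wPL_witness:
  assumes x: "x \<in> K"
    and wPL: "T x (Disj (Imp r (Conj p q)) (Imp (Imp (Imp (Conj p q) r) (Conj p q)) (Conj p q)))"
    and b: "b \<in> K" "le x b" "T b r" "\<not> T b q"
    and c: "c \<in> K" "le x c" "T c q" "\<not> T c p"
  obtains v where "v \<in> K" "le x v" "T v q" "\<not> T v p" "T v (Imp p r)"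
proof -
  let ?P = "Conj p q"
  have "\<not> T x (Imp r ?P)"
    using b T_Conj T_Imp[OF x] by blast
  then have Peirce: "T x (Imp (Imp (Imp ?P r) ?P) ?P)"
    using wPL T_Disj[OF x] by blast
  have "\<not> T c ?P" using c T_Conj by blast
  then obtain v where v: "v \<in> K" "le c v" "\<not> T v ?P"
    and v_max: "\<forall>u\<in>K. le v u \<longrightarrow> \<not> T u ?P \<longrightarrow> u = v"
    using maximal_refutation[OF c(1)] by blast
  have xv: "le x v" using trans[OF x c(1) v(1) c(2) v(2)] .
  have qv: "T v q" using persistent[OF c(1) v(1) v(2) c(3)] .
  have "\<not> T v (Imp (Imp ?P r) ?P)"
    using T_mp[OF v(1) persistent[OF x v(1) xv Peirce]] v(3) by blast
  then obtain u where "u \<in> K" "le v u" "T u (Imp ?P r)" "\<not> T u ?P"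
    using T_Imp[OF v(1)] by blast
  \<comment> \<open>maximality of \<open>v\<close> pulls \<open>p \<and> q \<rightarrow> r\<close> down to \<open>v\<close>, where \<open>q\<close> already holds\<close>
  with v_max have Pr: "T v (Imp ?P r)" by blast
  have "T v (Imp p r)"
    unfolding T_Imp[OF v(1)]
  proof (intro ballI impI)
    fix w assume w: "w \<in> K" "le v w" "T w p"
    then have "T w ?P" using persistent[OF v(1) w(1) w(2) qv] T_Conj by blast
    then show "T w r" using T_mp[OF w(1) persistent[OF v(1) w(1) w(2) Pr]] by blast
  qed
  with v xv qv show thesis
    using that T_Conj by blast
qed

lemma no_cycle:
  assumes x: "x \<in> K"
    and wPL: "\<And>P Q. T x (Disj (Imp Q P) (Imp (Imp (Imp P Q) P) P))"
    and bw2: "\<And>A B C. T x (Disj (Imp A (Disj B C)) (Disj (Imp B (Disj A C)) (Imp C (Disj A B))))"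
    and a: "a \<in> K" "le x a" "T a p" "\<not> T a r"
    and b: "b \<in> K" "le x b" "T b r" "\<not> T b q"
    and c: "c \<in> K" "le x c" "T c q" "\<not> T c p"
  shows False
proof -
  obtain va where va: "va \<in> K" "le x va" "T va p" "\<not> T va r" "T va (Imp r q)"
    using wPL_witness[OF x wPL c a] .
  obtain vb where vb: "vb \<in> K" "le x vb" "T vb r" "\<not> T vb q" "T vb (Imp q p)"
    using wPL_witness[OF x wPL a b] .
  obtain vc where vc: "vc \<in> K" "le x vc" "T vc q" "\<not> T vc p" "T vc (Imp p r)"
    using wPL_witness[OF x wPL b c] .
  define FA where "FA = Conj p (Imp r q)"
  define FB where "FB = Conj r (Imp q p)"
  define FC where "FC = Conj q (Imp p r)"
  have "T va FA" "\<not> T va FB" "\<not> T va FC"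
    using va T_mp[OF va(1), of p r] unfolding FA_def FB_def FC_def T_Conj[OF va(1)] by blast+
  moreover have "T vb FB" "\<not> T vb FC" "\<not> T vb FA"
    using vb T_mp[OF vb(1), of r q] unfolding FA_def FB_def FC_def T_Conj[OF vb(1)] by blast+
  moreover have "T vc FC" "\<not> T vc FA" "\<not> T vc FB"
    using vc T_mp[OF vc(1), of q p] unfolding FA_def FB_def FC_def T_Conj[OF vc(1)] by blast+
  \<comment> \<open>each of the three points refutes one disjunct of this \<open>bw2\<close> instance\<close>
  moreover have "T x (Imp FA (Disj FB FC)) \<or> T x (Imp FB (Disj FA FC)) \<or> T x (Imp FC (Disj FA FB))"
    using bw2 T_Disj[OF x] by blast
  ultimately show False
    using persistent[OF x] T_mp T_Disj va(1,2) vb(1,2) vc(1,2) by metis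
qed

end

section \<open>Depth in finite posets\<close>

text \<open>Copies of \<^const>\<open>strict_chain\<close> and \<^const>\<open>depth\<close> for arbitrary carrier types: the
  countermodel below has theories as worlds.\<close>

definition chain_in :: "'a set \<Rightarrow> ('a \<Rightarrow> 'a \<Rightarrow> bool) \<Rightarrow> 'a list \<Rightarrow> bool" where
  "chain_in W R xs \<longleftrightarrow> set xs \<subseteq> W \<and> successively (\<lambda>x y. R x y \<and> x \<noteq> y) xs"

definition depth_in :: "'a set \<Rightarrow> ('a \<Rightarrow> 'a \<Rightarrow> bool) \<Rightarrow> 'a \<Rightarrow> nat" where
  "depth_in W R x = Max {length xs | xs. xs \<noteq> [] \<and> hd xs = x \<and> chain_in W R xs}"

lemma depth_eq_depth_in: "depth W R x = depth_in W R x"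
  unfolding depth_def depth_in_def strict_chain_def chain_in_def successively_conv_nth ..

lemma chain_in_Cons_Cons:
  "chain_in W R (x # y # ys) \<longleftrightarrow> x \<in> W \<and> R x y \<and> x \<noteq> y \<and> chain_in W R (y # ys)"
  unfolding chain_in_def by auto

locale finite_poset =
  fixes W :: "'a set" and R :: "'a \<Rightarrow> 'a \<Rightarrow> bool"
  assumes finite: "finite W"
    and refl: "x \<in> W \<Longrightarrow> R x x"
    and trans: "x \<in> W \<Longrightarrow> y \<in> W \<Longrightarrow> z \<in> W \<Longrightarrow> R x y \<Longrightarrow> R y z \<Longrightarrow> R x z"
    and antisym: "x \<in> W \<Longrightarrow> y \<in> W \<Longrightarrow> R x y \<Longrightarrow> R y x \<Longrightarrow> x = y"
begin

abbreviation "dp \<equiv> depth_in W R"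

lemma chain_in_distinct:
  assumes "chain_in W R xs"
  shows "distinct xs"
proof -
  have "sorted_wrt (\<lambda>x y. R x y \<and> x \<noteq> y) xs"
    using assms unfolding chain_in_def
    by (subst successively_iff_sorted_wrt_strong[symmetric]) (auto dest: trans antisym)
  then show ?thesis by (induction xs) auto
qed

lemma finite_chain_lengths: "finite {length xs | xs. xs \<noteq> [] \<and> hd xs = x \<and> chain_in W R xs}"
proof (rule finite_subset)
  have "length xs \<le> card W" if "chain_in W R xs" for xs
  proof -
    have "length xs = card (set xs)" using chain_in_distinct[OF that] by (simp add: distinct_card)
    also have "\<dots> \<le> card W" using that finite unfolding chain_in_def by (simp add: card_mono)
    finally show ?thesis .
  qed
  then show "{length xs | xs. xs \<noteq> [] \<and> hd xs = x \<and> chain_in W R xs} \<subseteq> {..card W}"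
    by auto
qed simp

lemma length_le_depth: "chain_in W R xs \<Longrightarrow> xs \<noteq> [] \<Longrightarrow> length xs \<le> dp (hd xs)"
  unfolding depth_in_def by (rule Max_ge[OF finite_chain_lengths]) blast

lemma depth_attained:
  assumes "x \<in> W"
  obtains xs where "chain_in W R (x # xs)" "length (x # xs) = dp x"
proof -
  have "chain_in W R [x]" using assms unfolding chain_in_def by simp
  then have "{length xs | xs. xs \<noteq> [] \<and> hd xs = x \<and> chain_in W R xs} \<noteq> {}" by force
  from Max_in[OF finite_chain_lengths this] obtain ys
    where "ys \<noteq> []" "hd ys = x" "chain_in W R ys" "length ys = dp x"
    unfolding depth_in_def by auto
  then show thesis using that by (cases ys) auto
qed

lemma depth_pos: "x \<in> W \<Longrightarrow> 1 \<le> dp x"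
  using length_le_depth[of "[x]"] unfolding chain_in_def by simp

lemma depth_less:
  assumes "x \<in> W" "y \<in> W" "R x y" "x \<noteq> y"
  shows "dp y < dp x"
proof -
  obtain ys where "chain_in W R (y # ys)" "length (y # ys) = dp y"
    using depth_attained[OF assms(2)] .
  with assms have "chain_in W R (x # y # ys)" by (simp add: chain_in_Cons_Cons)
  from length_le_depth[OF this] show ?thesis using \<open>length (y # ys) = dp y\<close> by simp
qed

lemma depth_successor:
  assumes "x \<in> W" "2 \<le> dp x"
  obtains y where "y \<in> W" "R x y" "x \<noteq> y" "dp y = dp x - 1"
proof -
  obtain xs where xs: "chain_in W R (x # xs)" "length (x # xs) = dp x"
    using depth_attained[OF assms(1)] .
  with assms(2) obtain y ys where "xs = y # ys" by (cases xs) auto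
  with xs have y: "y \<in> W" "R x y" "x \<noteq> y" "chain_in W R (y # ys)"
    by (auto simp: chain_in_Cons_Cons chain_in_def)
  have "length (y # ys) \<le> dp y" using length_le_depth[OF y(4)] by simp
  moreover have "dp y < dp x" using depth_less[OF assms(1) y(1-3)] .
  ultimately show thesis using that y xs \<open>xs = y # ys\<close> by simp
qed

lemma depth_1_maximal: "x \<in> W \<Longrightarrow> dp x = 1 \<Longrightarrow> y \<in> W \<Longrightarrow> R x y \<Longrightarrow> y = x"
  using depth_less[of x y] depth_pos[of y] by fastforce

lemma depth_levels_above:
  assumes "x \<in> W" "1 \<le> j" "j \<le> dp x"
  shows "\<exists>y\<in>W. R x y \<and> dp y = j"
  using assms
proof (induction "dp x - j" arbitrary: x)
  case 0
  then show ?case using refl by force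
next
  case (Suc n)
  then have "2 \<le> dp x" by linarith
  then obtain y where y: "y \<in> W" "R x y" "dp y = dp x - 1"
    using depth_successor[OF Suc.prems(1)] by blast
  have "n = dp y - j" "j \<le> dp y" using Suc.hyps(2) y(3) by arith+
  then obtain z where "z \<in> W" "R y z" "dp z = j" using Suc.hyps(1) y(1) Suc.prems(2) by blast
  with Suc.prems(1) y show ?case using trans by blast
qed

lemma depth_mono_successors:
  assumes "x \<in> W" "x' \<in> W" and succ: "\<And>y. y \<in> W \<Longrightarrow> R x y \<Longrightarrow> x \<noteq> y \<Longrightarrow> R x' y \<and> x' \<noteq> y"
  shows "dp x \<le> dp x'"
proof -
  obtain xs where xs: "chain_in W R (x # xs)" "length (x # xs) = dp x"
    using depth_attained[OF assms(1)] .
  show ?thesis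
  proof (cases xs)
    case Nil
    then show ?thesis using xs depth_pos[OF assms(2)] by simp
  next
    case (Cons y ys)
    with xs assms have "chain_in W R (x' # xs)"
      by (auto simp: chain_in_Cons_Cons chain_in_def)
    from length_le_depth[OF this] show ?thesis using xs by simp
  qed
qed

lemma maximal_above:
  assumes "w \<in> W" "P w"
  obtains v where "v \<in> W" "R w v" "P v" "\<And>u. u \<in> W \<Longrightarrow> R v u \<Longrightarrow> P u \<Longrightarrow> u = v"
proof -
  let ?Q = "\<lambda>v. v \<in> W \<and> R w v \<and> P v"
  obtain v where v: "?Q v" and least: "\<And>u. ?Q u \<Longrightarrow> dp v \<le> dp u"
    using ex_has_least_nat[of ?Q w dp] assms refl by blast
  show thesis
  proof (rule that[OF _ _ v[THEN conjunct2, THEN conjunct2]])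
    fix u assume "u \<in> W" "R v u" "P u"
    with v have "?Q u" using trans assms(1) by blast
    with least \<open>u \<in> W\<close> \<open>R v u\<close> v show "u = v" using depth_less by fastforce
  qed (use v in auto)
qed

lemma cyclic_incomparable_same_depth:
  assumes cyc: "cyclic W R" and "x \<in> W" "x' \<in> W" "\<not> R x x'" "\<not> R x' x"
  shows "dp x = dp x'"
proof -
  have "R a' y \<and> a' \<noteq> y"
    if "a \<in> W" "a' \<in> W" "\<not> R a a'" "y \<in> W" "R a y" "a \<noteq> y" for a a' y
    using cyc that antisym[of a y] unfolding cyclic_def by blast
  then show ?thesis
    using depth_mono_successors assms(2-5) by (metis le_antisym)
qed

lemma cyclic_below_shallower:
  assumes "cyclic W R" "x \<in> W" "y \<in> W" "dp y < dp x"
  shows "R x y"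
  using assms depth_less[of y x] cyclic_incomparable_same_depth[of x y] refl[of x]
  by (metis less_asym less_irrefl)

lemma cyclic_level_card:
  assumes cyc: "cyclic W R"
  shows "card {x \<in> W. dp x = j} \<le> 2"
proof (rule ccontr)
  assume "\<not> ?thesis"
  then obtain L where "L \<subseteq> {x \<in> W. dp x = j}" "card L = 3"
    using obtain_subset_with_card_n[of 3] by (metis not_less_eq_eq numeral_2_eq_2 numeral_3_eq_3)
  then obtain a b c where abc: "a \<in> W" "b \<in> W" "c \<in> W" "dp a = j" "dp b = j" "dp c = j"
    "a \<noteq> b" "a \<noteq> c" "b \<noteq> c"
    by (auto simp: card_3_iff)
  then have "\<not> R a c" "\<not> R b a" "\<not> R c b"
    using depth_less by (metis less_irrefl)+
  with abc cyc show False unfolding cyclic_def by blast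
qed

end

lemma finite_poset_subset: "finite X \<Longrightarrow> finite_poset X (\<subseteq>)"
  by unfold_locales auto

section \<open>The canonical model of Box and a finite countermodel\<close>

lemma cyclic_subset: "cyclic W R \<Longrightarrow> X \<subseteq> W \<Longrightarrow> cyclic X R"
  unfolding cyclic_def by blast

lemma kripke_model_prime_theories: "kripke_model {D. prime_theory D} (\<subseteq>) (\<lambda>D A. A \<in> D)"
proof
  fix w A B assume "w \<in> {D. prime_theory D}"
  then show "Conj A B \<in> w \<longleftrightarrow> A \<in> w \<and> B \<in> w" "Disj A B \<in> w \<longleftrightarrow> A \<in> w \<or> B \<in> w"
    and "Imp A B \<in> w \<longleftrightarrow> (\<forall>u\<in>{D. prime_theory D}. w \<subseteq> u \<longrightarrow> A \<in> u \<longrightarrow> B \<in> u)"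
    using prime_theory_Conj prime_theory_Disj prime_theory_Imp by simp_all
next
  fix w A assume w: "w \<in> {D. prime_theory D}" and "A \<notin> w"
  then obtain D where D: "maximal_omitting A D" "w \<subseteq> D"
    using Lindenbaum[OF prime_theory_Box_theory] by blast
  then have "\<forall>u\<in>{D. prime_theory D}. D \<subseteq> u \<longrightarrow> A \<notin> u \<longrightarrow> u = D"
    unfolding maximal_omitting_def using prime_theory_Box_theory by blast
  moreover have "D \<in> {D. prime_theory D}" "A \<notin> D"
    using maximal_omitting_prime[OF D(1)] D(1) unfolding maximal_omitting_def by simp_all
  ultimately show "\<exists>v\<in>{D. prime_theory D}. w \<subseteq> v \<and> A \<notin> v
      \<and> (\<forall>u\<in>{D. prime_theory D}. v \<subseteq> u \<longrightarrow> A \<notin> u \<longrightarrow> u = v)"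
    using D(2) by blast
qed auto

lemma cyclic_prime_theories_above:
  assumes G: "prime_theory G"
  shows "cyclic {D. prime_theory D \<and> G \<subseteq> D} (\<subseteq>)"
  unfolding cyclic_def
proof (intro ballI)
  interpret kripke_model "{D. prime_theory D}" "(\<subseteq>)" "\<lambda>D A. A \<in> D"
    by (rule kripke_model_prime_theories)
  fix a b c assume abc: "a \<in> {D. prime_theory D \<and> G \<subseteq> D}" "b \<in> {D. prime_theory D \<and> G \<subseteq> D}"
    "c \<in> {D. prime_theory D \<and> G \<subseteq> D}"
  show "a \<subseteq> c \<or> b \<subseteq> a \<or> c \<subseteq> b"
  proof (rule ccontr)
    assume "\<not> ?thesis"
    then obtain p q r where pqr: "p \<in> a" "r \<notin> a" "r \<in> b" "q \<notin> b" "q \<in> c" "p \<notin> c"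
      by blast
    have "Box \<subseteq> G" using G unfolding prime_theory_def Box_theory_def by blast
    then have "\<And>P Q. Disj (Imp Q P) (Imp (Imp (Imp P Q) P) P) \<in> G"
      and "\<And>A B C. Disj (Imp A (Disj B C)) (Disj (Imp B (Disj A C)) (Imp C (Disj A B))) \<in> G"
      using wPL_instance_in_Box bw2_instance_in_Box by blast+
    from no_cycle[of G, OF _ this] show False
      using G abc pqr by blast
  qed
qed

lemma maximal_omitting_Bot_Imp_Bot:
  assumes "maximal_omitting Bot M" "A \<notin> M"
  shows "Imp A Bot \<in> M"
proof (rule ccontr)
  assume "Imp A Bot \<notin> M"
  moreover have M: "Box_theory M" using assms(1) unfolding maximal_omitting_def by blast
  ultimately obtain D where "prime_theory D" "M \<subseteq> D" "A \<in> D" "Bot \<notin> D"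
    using ex_prime_witness by blast
  then have "D = M"
    using assms(1) prime_theory_Box_theory unfolding maximal_omitting_def by blast
  with assms(2) \<open>A \<in> D\<close> show False by blast
qed

primrec subformulas :: "fm \<Rightarrow> fm set" where
  "subformulas (Var n) = {Var n}"
| "subformulas Bot = {Bot}"
| "subformulas (Conj A B) = insert (Conj A B) (subformulas A \<union> subformulas B)"
| "subformulas (Disj A B) = insert (Disj A B) (subformulas A \<union> subformulas B)"
| "subformulas (Imp A B) = insert (Imp A B) (subformulas A \<union> subformulas B)"

lemma finite_subformulas: "finite (subformulas A)"
  by (induction A) auto

lemma subformulas_refl: "A \<in> subformulas A"
  by (cases A) auto

lemma subformulas_trans: "B \<in> subformulas A \<Longrightarrow> subformulas B \<subseteq> subformulas A"
  by (induction A) auto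

lemma subformulas_components:
  "Conj A B \<in> subformulas C \<Longrightarrow> A \<in> subformulas C \<and> B \<in> subformulas C"
  "Disj A B \<in> subformulas C \<Longrightarrow> A \<in> subformulas C \<and> B \<in> subformulas C"
  "Imp A B \<in> subformulas C \<Longrightarrow> A \<in> subformulas C \<and> B \<in> subformulas C"
  using subformulas_trans subformulas_refl by fastforce+

definition witness_closed :: "fm \<Rightarrow> fm set set \<Rightarrow> bool" where
  "witness_closed \<phi> X \<longleftrightarrow> (\<forall>z\<in>X. \<forall>A B. Imp A B \<in> subformulas \<phi> \<longrightarrow> Imp A B \<notin> z
     \<longrightarrow> (\<exists>z'\<in>X. z \<subseteq> z' \<and> A \<in> z' \<and> B \<notin> z'))"

definition witness_step :: "fm set \<Rightarrow> fm \<times> fm \<Rightarrow> fm set" where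
  "witness_step z = (\<lambda>(A, B). if Imp A B \<in> z \<or> A \<in> z then z
     else SOME z'. prime_theory z' \<and> z \<subseteq> z' \<and> A \<in> z' \<and> B \<notin> z')"

lemma witness_step_extends:
  assumes z: "prime_theory z"
  shows "prime_theory (witness_step z (A, B)) \<and> z \<subseteq> witness_step z (A, B)
    \<and> (Imp A B \<notin> z \<longrightarrow> A \<in> witness_step z (A, B) \<and> B \<notin> witness_step z (A, B))
    \<and> (witness_step z (A, B) \<noteq> z \<longrightarrow> A \<notin> z \<and> Imp A B \<notin> z)"
proof (cases "Imp A B \<in> z \<or> A \<in> z")
  case True
  moreover have "B \<notin> z" if "A \<in> z" "Imp A B \<notin> z"
    using that Box_theory_mp Box_theory_IPC IPC.ax1 prime_theory_Box_theory[OF z] by blast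
  ultimately show ?thesis using z unfolding witness_step_def by auto
next
  case False
  then have "\<exists>z'. prime_theory z' \<and> z \<subseteq> z' \<and> A \<in> z' \<and> B \<notin> z'"
    using ex_prime_witness[OF prime_theory_Box_theory[OF z]] by metis
  from someI_ex[OF this] show ?thesis
    using False unfolding witness_step_def by auto
qed

lemma foldl_witness_step_prime:
  "prime_theory z \<Longrightarrow> prime_theory (foldl witness_step z ps) \<and> z \<subseteq> foldl witness_step z ps"
proof (induction ps arbitrary: z)
  case (Cons AB ps)
  then show ?case
    using witness_step_extends[OF Cons.prems, of "fst AB" "snd AB"] by force
qed simp

text \<open>Every step that changes the theory adds its first component, a new element of \<open>S\<close>.\<close>

lemma foldl_witness_step_short:
  assumes "prime_theory z" "set ps \<subseteq> P" "fst ` P \<subseteq> S" "finite S"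
  shows "\<exists>qs. set qs \<subseteq> P \<and> length qs \<le> card (S - z)
    \<and> foldl witness_step z qs = foldl witness_step z ps"
  using assms(1,2)
proof (induction ps arbitrary: z)
  case Nil
  show ?case by (intro exI[of _ "[]"]) simp
next
  case (Cons AB ps)
  obtain A B where AB: "AB = (A, B)" by fastforce
  let ?z' = "witness_step z (A, B)"
  have z': "prime_theory ?z'" "z \<subseteq> ?z'" "?z' \<noteq> z \<Longrightarrow> A \<notin> z \<and> A \<in> ?z'"
    using witness_step_extends[OF Cons.prems(1), of A B] by blast+
  obtain qs where qs: "set qs \<subseteq> P" "length qs \<le> card (S - ?z')"
    "foldl witness_step ?z' qs = foldl witness_step ?z' ps"
    using Cons.IH[OF z'(1)] Cons.prems(2) by auto
  show ?case
  proof (cases "?z' = z")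
    case True
    with qs AB show ?thesis by (intro exI[of _ qs]) simp
  next
    case False
    have "A \<in> S" using Cons.prems(2) AB assms(3) by force
    with z'(2) z'(3)[OF False] have "S - ?z' \<subset> S - z" by blast
    then have "card (S - ?z') < card (S - z)" using assms(4) by (meson finite_Diff psubset_card_mono)
    with qs AB Cons.prems(2) show ?thesis by (intro exI[of _ "AB # qs"]) simp
  qed
qed

lemma finite_foldl_witness_step:
  assumes "prime_theory z" "finite P"
  shows "finite {foldl witness_step z ps | ps. set ps \<subseteq> P}"
proof (rule finite_subset)
  let ?short = "{qs. set qs \<subseteq> P \<and> length qs \<le> card (fst ` P - z)}"
  show "{foldl witness_step z ps | ps. set ps \<subseteq> P} \<subseteq> foldl witness_step z ` ?short"
  proof
    fix y assume "y \<in> {foldl witness_step z ps | ps. set ps \<subseteq> P}"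
    then obtain ps where "set ps \<subseteq> P" "y = foldl witness_step z ps" by blast
    with foldl_witness_step_short[OF assms(1) this(1) subset_refl finite_imageI[OF assms(2)]]
    show "y \<in> foldl witness_step z ` ?short" by (metis (mono_tags, lifting) image_eqI mem_Collect_eq)
  qed
  show "finite (foldl witness_step z ` ?short)"
    using finite_lists_length_le[OF assms(2)] by simp
qed

context
  fixes \<phi> :: fm
  assumes \<phi>_notin_Box: "\<phi> \<notin> Box"
begin

definition root_theory :: "fm set" where
  "root_theory = (SOME D. maximal_omitting \<phi> D)"

definition top_theory :: "fm set" where
  "top_theory = (SOME D. maximal_omitting Bot D \<and> root_theory \<subseteq> D)"

definition countermodel :: "fm set set" where
  "countermodel = insert top_theory
     {foldl witness_step root_theory ps | ps. set ps \<subseteq> {(A, B). Imp A B \<in> subformulas \<phi>}}"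

lemma root_theory_maximal: "maximal_omitting \<phi> root_theory"
proof -
  have "\<exists>D. maximal_omitting \<phi> D" using Lindenbaum[OF Box_theory_Box \<phi>_notin_Box] by metis
  then show ?thesis unfolding root_theory_def by (rule someI_ex)
qed

lemma root_theory_prime: "prime_theory root_theory"
  using maximal_omitting_prime[OF root_theory_maximal] .

lemma top_theory_maximal: "maximal_omitting Bot top_theory \<and> root_theory \<subseteq> top_theory"
proof -
  have "\<exists>D. maximal_omitting Bot D \<and> root_theory \<subseteq> D"
    using Lindenbaum[OF prime_theory_Box_theory prime_theory_Bot, OF root_theory_prime root_theory_prime]
    by metis
  then show ?thesis unfolding top_theory_def by (rule someI_ex)
qed

text \<open>Weak excluded middle in the root makes \<open>top_theory\<close> the only consistent maximal
  theory above it.\<close>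

lemma below_top_theory:
  assumes y: "prime_theory y" "root_theory \<subseteq> y"
  shows "y \<subseteq> top_theory"
proof -
  obtain M where M: "maximal_omitting Bot M" "y \<subseteq> M"
    using Lindenbaum[OF prime_theory_Box_theory prime_theory_Bot, OF y(1) y(1)] by metis
  have "A \<in> top_theory" if "A \<in> M" for A
  proof (rule ccontr)
    assume "A \<notin> top_theory"
    then have nA: "Imp A Bot \<in> top_theory" using maximal_omitting_Bot_Imp_Bot top_theory_maximal by blast
    have "Disj (Imp A Bot) (Imp (Imp A Bot) Bot) \<in> root_theory"
      using wem_instance_in_Box root_theory_prime unfolding prime_theory_def Box_theory_def by blast
    then consider "Imp A Bot \<in> root_theory" | "Imp (Imp A Bot) Bot \<in> root_theory"
      using prime_theory_Disj[OF root_theory_prime] by blast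
    then show False
    proof cases
      case 1
      with y M(2) have "Imp A Bot \<in> M" by blast
      with M(1) that show False unfolding maximal_omitting_def by (meson Box_theory_mp)
    next
      case 2
      with top_theory_maximal have "Imp (Imp A Bot) Bot \<in> top_theory" by blast
      with top_theory_maximal nA show False unfolding maximal_omitting_def by (meson Box_theory_mp)
    qed
  qed
  with M show ?thesis by blast
qed

lemma countermodel_prime:
  assumes "z \<in> countermodel"
  shows "prime_theory z" "root_theory \<subseteq> z" "z \<subseteq> top_theory"
proof -
  show "prime_theory z" "root_theory \<subseteq> z"
    using assms foldl_witness_step_prime[OF root_theory_prime] top_theory_maximal maximal_omitting_prime
    unfolding countermodel_def by auto
  then show "z \<subseteq> top_theory" using below_top_theory by blast
qed

lemma root_in_countermodel: "root_theory \<in> countermodel"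
  unfolding countermodel_def by (auto intro!: exI[of _ "[]"])

lemma top_in_countermodel: "top_theory \<in> countermodel"
  unfolding countermodel_def by simp

lemma finite_countermodel: "finite countermodel"
proof -
  have "{(A, B). Imp A B \<in> subformulas \<phi>} \<subseteq> subformulas \<phi> \<times> subformulas \<phi>"
    using subformulas_components(3) by blast
  then have "finite {(A, B). Imp A B \<in> subformulas \<phi>}"
    using finite_subset finite_subformulas by blast
  then show ?thesis
    unfolding countermodel_def using finite_foldl_witness_step[OF root_theory_prime] by simp
qed

lemma cyclic_countermodel: "cyclic countermodel (\<subseteq>)"
  using cyclic_subset[OF cyclic_prime_theories_above[OF root_theory_prime]] countermodel_prime
  by blast

lemma witness_closed_countermodel: "witness_closed \<phi> countermodel"
  unfolding witness_closed_def
proof (intro ballI allI impI)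
  fix z A B assume z: "z \<in> countermodel" and AB: "Imp A B \<in> subformulas \<phi>" "Imp A B \<notin> z"
  show "\<exists>z'\<in>countermodel. z \<subseteq> z' \<and> A \<in> z' \<and> B \<notin> z'"
  proof (cases "z = top_theory")
    case True
    then obtain D where D: "prime_theory D" "top_theory \<subseteq> D" "A \<in> D" "B \<notin> D"
      using ex_prime_witness[OF prime_theory_Box_theory[OF countermodel_prime(1)]] z AB(2) by metis
    then have "D = top_theory"
      using top_theory_maximal prime_theory_Box_theory prime_theory_Bot
      unfolding maximal_omitting_def by blast
    with D True show ?thesis using top_in_countermodel by blast
  next
    case False
    then obtain ps where ps: "set ps \<subseteq> {(A, B). Imp A B \<in> subformulas \<phi>}"
      "z = foldl witness_step root_theory ps"
      using z unfolding countermodel_def by blast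
    then have "witness_step z (A, B) \<in> countermodel"
      unfolding countermodel_def using AB(1)
      by (auto intro!: exI[of _ "ps @ [(A, B)]"])
    then show ?thesis
      using witness_step_extends[OF countermodel_prime(1)[OF z], of A B] AB(2) by blast
  qed
qed

end

section \<open>Frames of Box\<close>

lemma frame_of_finite_poset: "frame_of L W R \<Longrightarrow> finite_poset W R"
  unfolding frame_of_def finite_rooted_frame_def by unfold_locales blast+

lemma frame_of_root: "frame_of L W R \<Longrightarrow> \<exists>r\<in>W. \<forall>x\<in>W. R r x"
  unfolding frame_of_def finite_rooted_frame_def by blast

lemma frame_of_valid: "frame_of L W R \<Longrightarrow> A \<in> L \<Longrightarrow> (\<forall>n. upset W R (V n)) \<Longrightarrow> x \<in> W
    \<Longrightarrow> sat W R V x A"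
  unfolding frame_of_def valid_in_def by blast

lemma sat_persistent:
  assumes "finite_poset W R" "\<forall>n. upset W R (V n)"
  shows "x \<in> W \<Longrightarrow> y \<in> W \<Longrightarrow> R x y \<Longrightarrow> sat W R V x A \<Longrightarrow> sat W R V y A"
proof (induction A arbitrary: x y)
  case (Var n)
  then show ?case using assms(2) unfolding upset_def by auto
next
  case (Imp A B)
  have "R x z" if "z \<in> W" "R y z" for z
    using finite_poset.trans[OF assms(1) Imp.prems(1,2) that(1) Imp.prems(3) that(2)] .
  with Imp.prems(4) show ?case by simp
qed auto

lemma kripke_model_frame:
  assumes W: "finite_poset W R" and V: "\<forall>n. upset W R (V n)"
  shows "kripke_model W R (\<lambda>x A. sat W R V x A)"
proof (unfold_locales, simp_all only: sat.simps)
  show "w \<in> W \<Longrightarrow> R w w" for w using finite_poset.refl[OF W] .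
  show "w \<in> W \<Longrightarrow> u \<in> W \<Longrightarrow> v \<in> W \<Longrightarrow> R w u \<Longrightarrow> R u v \<Longrightarrow> R w v" for w u v
    using finite_poset.trans[OF W] .
  show "w \<in> W \<Longrightarrow> u \<in> W \<Longrightarrow> R w u \<Longrightarrow> sat W R V w A \<Longrightarrow> sat W R V u A" for w u A
    using sat_persistent[OF W V] .
next
  fix w A assume w: "w \<in> W" and nA: "\<not> sat W R V w A"
  obtain v where v: "v \<in> W" "R w v" "\<not> sat W R V v A"
    "\<And>u. u \<in> W \<Longrightarrow> R v u \<Longrightarrow> \<not> sat W R V u A \<Longrightarrow> u = v"
    using finite_poset.maximal_above[OF W w, where P = "\<lambda>v. \<not> sat W R V v A", OF nA] by blast
  show "\<exists>v\<in>W. R w v \<and> \<not> sat W R V v A \<and> (\<forall>u\<in>W. R v u \<longrightarrow> \<not> sat W R V u A \<longrightarrow> u = v)"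
    using v by (intro bexI[of _ v]) simp_all
qed

lemma upset_not_below:
  assumes "finite_poset W R" "c \<in> W"
  shows "upset W R {y \<in> W. \<not> R y c}"
  unfolding upset_def
proof (intro conjI ballI impI)
  fix x y assume "x \<in> {y \<in> W. \<not> R y c}" "y \<in> W" "R x y"
  then show "y \<in> {y \<in> W. \<not> R y c}"
    using finite_poset.trans[OF assms(1), of x y c] assms(2) by blast
qed auto

lemma cyclic_frame:
  assumes fr: "frame_of L W R" and Box: "Box \<subseteq> L"
  shows "cyclic W R"
  unfolding cyclic_def
proof (intro ballI)
  have W: "finite_poset W R" using frame_of_finite_poset[OF fr] .
  obtain x where x: "x \<in> W" "\<And>y. y \<in> W \<Longrightarrow> R x y"
    using frame_of_root[OF fr] by blast
  fix a b c assume abc: "a \<in> W" "b \<in> W" "c \<in> W"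
  show "R a c \<or> R b a \<or> R c b"
  proof (rule ccontr)
    assume nR: "\<not> (R a c \<or> R b a \<or> R c b)"
    define V where "V n = {y \<in> W. \<not> R y (if n = 0 then c else if n = 1 then b else a)}" for n :: nat
    have "(if n = 0 then c else if n = 1 then b else a) \<in> W" for n :: nat
      using abc by simp
    then have V: "\<forall>n. upset W R (V n)" unfolding V_def using upset_not_below[OF W] by blast
    interpret kripke_model W R "\<lambda>x A. sat W R V x A"
      using kripke_model_frame[OF W V] .
    have wPL: "sat W R V x (Disj (Imp Q P) (Imp (Imp (Imp P Q) P) P))" for P Q
      using frame_of_valid[OF fr subsetD[OF Box wPL_instance_in_Box] V x(1)] .
    have bw2: "sat W R V x (Disj (Imp A (Disj B C)) (Disj (Imp B (Disj A C)) (Imp C (Disj A B))))"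
      for A B C
      using frame_of_valid[OF fr subsetD[OF Box bw2_instance_in_Box] V x(1)] .
    have "sat W R V a (Var 0)" "\<not> sat W R V a (Var 2)"
      "sat W R V b (Var 2)" "\<not> sat W R V b (Var 1)"
      "sat W R V c (Var 1)" "\<not> sat W R V c (Var 0)"
      using nR abc finite_poset.refl[OF W] by (simp_all add: V_def)
    from no_cycle[OF x(1) wPL bw2 abc(1) x(2)[OF abc(1)] this(1,2) abc(2) x(2)[OF abc(2)] this(3,4)
        abc(3) x(2)[OF abc(3)] this(5,6)]
    show False .
  qed
qed

section \<open>P-morphisms onto sets of prime theories\<close>

definition p_morphism ::
  "'a set \<Rightarrow> ('a \<Rightarrow> 'a \<Rightarrow> bool) \<Rightarrow> 'b set \<Rightarrow> ('b \<Rightarrow> 'b \<Rightarrow> bool) \<Rightarrow> ('a \<Rightarrow> 'b) \<Rightarrow> bool" where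
  "p_morphism W R X S f \<longleftrightarrow> f ` W \<subseteq> X
     \<and> (\<forall>y\<in>W. \<forall>y'\<in>W. R y y' \<longrightarrow> S (f y) (f y'))
     \<and> (\<forall>y\<in>W. \<forall>z\<in>X. S (f y) z \<longrightarrow> (\<exists>y'\<in>W. R y y' \<and> f y' = z))"

lemma p_morphismD:
  assumes "p_morphism W R X S f" "y \<in> W"
  shows "f y \<in> X" "y' \<in> W \<Longrightarrow> R y y' \<Longrightarrow> S (f y) (f y')"
    and "z \<in> X \<Longrightarrow> S (f y) z \<Longrightarrow> \<exists>y'\<in>W. R y y' \<and> f y' = z"
  using assms unfolding p_morphism_def by blast+

lemma upsetD: "upset W R C \<Longrightarrow> y \<in> C \<Longrightarrow> y \<in> W"
  "upset W R C \<Longrightarrow> y \<in> C \<Longrightarrow> y' \<in> W \<Longrightarrow> R y y' \<Longrightarrow> y' \<in> C"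
  unfolding upset_def by blast+

lemma upset_successors:
  assumes "finite_poset W R" "x \<in> W"
  shows "upset W R {y \<in> W. R x y}"
  unfolding upset_def
proof (intro conjI ballI impI)
  fix y z assume "y \<in> {y \<in> W. R x y}" "z \<in> W" "R y z"
  then show "z \<in> {y \<in> W. R x y}" using finite_poset.trans[OF assms(1) assms(2), of y z] by blast
qed blast

lemma upset_p_morphism_preimage:
  assumes C: "upset W R C" and f: "p_morphism C R X (\<subseteq>) f"
  shows "upset W R {y \<in> C. a \<in> f y}"
  unfolding upset_def
proof (intro conjI ballI impI)
  fix y y' assume "y \<in> {y \<in> C. a \<in> f y}" "y' \<in> W" "R y y'"
  with upsetD[OF C] p_morphismD(2)[OF f] show "y' \<in> {y \<in> C. a \<in> f y}" by blast
qed (use upsetD(1)[OF C] in blast)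

lemma sat_Imp_p_morphism_iff:
  fixes X :: "fm set set"
  assumes C: "upset W R C" and f: "p_morphism C R X (\<subseteq>) f"
    and prime: "\<And>z. z \<in> X \<Longrightarrow> prime_theory z" and y: "y \<in> C"
    and wit: "Imp A B \<notin> f y \<Longrightarrow> \<exists>z\<in>X. f y \<subseteq> z \<and> A \<in> z \<and> B \<notin> z"
    and IH: "\<And>y'. y' \<in> C \<Longrightarrow> sat W R V y' A \<longleftrightarrow> A \<in> f y'"
      "\<And>y'. y' \<in> C \<Longrightarrow> sat W R V y' B \<longleftrightarrow> B \<in> f y'"
  shows "sat W R V y (Imp A B) \<longleftrightarrow> Imp A B \<in> f y"
proof
  assume sat: "sat W R V y (Imp A B)"
  show "Imp A B \<in> f y"
  proof (rule ccontr)
    assume "Imp A B \<notin> f y"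
    then obtain z where z: "z \<in> X" "f y \<subseteq> z" "A \<in> z" "B \<notin> z" using wit by blast
    then obtain y' where y': "y' \<in> C" "R y y'" "f y' = z"
      using p_morphismD(3)[OF f y] by blast
    then have "sat W R V y' A \<longrightarrow> sat W R V y' B"
      using sat upsetD(1)[OF C] by simp
    with z y' IH show False by simp
  qed
next
  assume Imp_in: "Imp A B \<in> f y"
  show "sat W R V y (Imp A B)"
    unfolding sat.simps
  proof (intro ballI impI)
    fix y' assume y': "y' \<in> W" "R y y'" "sat W R V y' A"
    then have "y' \<in> C" using upsetD(2)[OF C y] by blast
    then have "Imp A B \<in> f y'" "A \<in> f y'"
      using Imp_in p_morphismD(2)[OF f y] y' IH(1) by blast+
    then have "B \<in> f y'"
      using Box_theory_mp[OF prime_theory_Box_theory[OF prime[OF p_morphismD(1)[OF f \<open>y' \<in> C\<close>]]]]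
      by blast
    with IH(2)[OF \<open>y' \<in> C\<close>] show "sat W R V y' B" by blast
  qed
qed

lemma sat_p_morphism_iff:
  fixes X :: "fm set set"
  assumes C: "upset W R C" and f: "p_morphism C R X (\<subseteq>) f"
    and X: "\<And>z. z \<in> X \<Longrightarrow> prime_theory z" "witness_closed \<phi> X"
    and "A \<in> subformulas \<phi>" "y \<in> C"
  shows "sat W R (\<lambda>n. {y \<in> C. Var n \<in> f y}) y A \<longleftrightarrow> A \<in> f y"
  using assms(5,6)
proof (induction A arbitrary: y)
  case Bot
  then show ?case using prime_theory_Bot[OF X(1)[OF p_morphismD(1)[OF f Bot.prems(2)]]] by simp
next
  case (Conj A B)
  then have "A \<in> subformulas \<phi>" "B \<in> subformulas \<phi>"
    using subformulas_components(1) by blast+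
  with Conj show ?case using prime_theory_Conj[OF X(1)[OF p_morphismD(1)[OF f Conj.prems(2)]]] by simp
next
  case (Disj A B)
  then have "A \<in> subformulas \<phi>" "B \<in> subformulas \<phi>"
    using subformulas_components(2) by blast+
  with Disj show ?case using prime_theory_Disj[OF X(1)[OF p_morphismD(1)[OF f Disj.prems(2)]]] by simp
next
  case (Imp A B)
  have "\<exists>z\<in>X. f y \<subseteq> z \<and> A \<in> z \<and> B \<notin> z" if "Imp A B \<notin> f y"
    using X(2) p_morphismD(1)[OF f Imp.prems(2)] Imp.prems(1) that
    unfolding witness_closed_def by blast
  with Imp subformulas_components(3) show ?case
    using sat_Imp_p_morphism_iff[OF C f X(1) Imp.prems(2)] by blast
qed simp

section \<open>Collapsing a long stack onto a finite cyclic poset\<close>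

lemma ex_onto_if_card_le:
  assumes "finite A" "finite B" "b \<in> B" "card B \<le> card A"
  shows "\<exists>g. g ` A = B"
proof -
  obtain h where h: "h ` B \<subseteq> A" "inj_on h B"
    using card_le_inj[OF assms(2,1,4)] by blast
  define g where "g a = (if a \<in> h ` B then inv_into B h a else b)" for a
  have "g ` A \<subseteq> B"
    unfolding g_def using assms(3) inv_into_into[of _ h B] by auto
  moreover have "B \<subseteq> g ` A"
  proof
    fix x assume x: "x \<in> B"
    then have "g (h x) = x" unfolding g_def using inv_into_f_f[OF h(2)] by simp
    with x h(1) show "x \<in> g ` A" by (metis image_eqI image_subset_iff)
  qed
  ultimately show ?thesis by blast
qed

locale stack_collapse = W: finite_poset W R + X: finite_poset X S
  for W :: "'a set" and R and X :: "'b set" and S +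
  fixes r t :: 'b and d :: nat
  assumes W_cyclic: "cyclic W R" and X_cyclic: "cyclic X S"
    and root: "r \<in> X" "\<And>z. z \<in> X \<Longrightarrow> S r z"
    and top: "t \<in> X" "\<And>z. z \<in> X \<Longrightarrow> S z t"
    and stack: "\<And>i. i < X.dp r \<Longrightarrow> 1 < card {x \<in> W. W.dp x = d + i}"
begin

text \<open>With \<open>m = X.dp r\<close>, the point \<open>apex\<close> has depth \<open>d + m - 1\<close>. Its cone is collapsed
  depth by depth: depth \<open>d + j - 1\<close> onto depth \<open>j\<close> of \<open>X\<close> for \<open>1 \<le> j \<le> m\<close>
  (at least two points onto at most two), and all depths \<open>\<le> d\<close> onto the top \<open>t\<close>.\<close>

definition level :: "nat \<Rightarrow> nat" where
  "level n = max 1 (n + 1 - d)"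

definition apex :: 'a where
  "apex = (SOME e. e \<in> W \<and> W.dp e = d + X.dp r - 1)"

definition cone_level :: "nat \<Rightarrow> 'a set" where
  "cone_level j = {y \<in> W. R apex y \<and> level (W.dp y) = j}"

definition X_level :: "nat \<Rightarrow> 'b set" where
  "X_level j = {z \<in> X. X.dp z = j}"

lemma root_depth_pos: "1 \<le> X.dp r"
  using X.depth_pos[OF root(1)] .

lemma apex: "apex \<in> W" "W.dp apex = d + X.dp r - 1"
proof -
  have "X.dp r - 1 < X.dp r" using root_depth_pos by simp
  from stack[OF this] have "{x \<in> W. W.dp x = d + (X.dp r - 1)} \<noteq> {}"
    by (metis card.empty not_less_zero)
  then obtain e where "e \<in> W" "W.dp e = d + (X.dp r - 1)" by blast
  moreover have "d + (X.dp r - 1) = d + X.dp r - 1" using root_depth_pos by simp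
  ultimately have "\<exists>e. e \<in> W \<and> W.dp e = d + X.dp r - 1" by metis
  from someI_ex[OF this] show "apex \<in> W" "W.dp apex = d + X.dp r - 1"
    unfolding apex_def by blast+
qed

lemma below_apex_iff: "y \<in> W \<Longrightarrow> R apex y \<longleftrightarrow> y = apex \<or> W.dp y < W.dp apex"
  using W.depth_less[OF apex(1)] W.refl[OF apex(1)] W.cyclic_below_shallower[OF W_cyclic apex(1)]
  by blast

lemma level_mono: "n \<le> n' \<Longrightarrow> level n \<le> level n'"
  unfolding level_def by simp

lemma level_apex: "level (W.dp apex) = X.dp r"
  using apex(2) root_depth_pos unfolding level_def by simp

lemma level_range: "y \<in> W \<Longrightarrow> R apex y \<Longrightarrow> 1 \<le> level (W.dp y) \<and> level (W.dp y) \<le> X.dp r"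
  using below_apex_iff level_mono[of "W.dp y" "W.dp apex"] level_apex unfolding level_def
  by (metis less_imp_le_nat max.cobounded1 order_refl)

lemma X_depth_range: "z \<in> X \<Longrightarrow> 1 \<le> X.dp z \<and> X.dp z \<le> X.dp r"
  using X.depth_pos X.depth_less[OF root(1) _ root(2)] by (metis order_less_imp_le order_refl)

lemma X_level_root: "X_level (X.dp r) = {r}"
  unfolding X_level_def using X.depth_less[OF root(1) _ root(2)] root(1) by fastforce

lemma X_level_1: "X_level 1 \<subseteq> {t}"
  unfolding X_level_def using X.depth_1_maximal top by blast

lemma card_X_level_le_cone_level:
  assumes j: "1 \<le> j" "j \<le> X.dp r"
  shows "X_level j \<noteq> {}" "card (X_level j) \<le> card (cone_level j)"
proof -
  show "X_level j \<noteq> {}"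
    using X.depth_levels_above[OF root(1) j] unfolding X_level_def by blast
  have fin: "finite (cone_level j)" unfolding cone_level_def using W.finite by simp
  show "card (X_level j) \<le> card (cone_level j)"
  proof (cases "j = X.dp r")
    case True
    have "apex \<in> cone_level j" unfolding cone_level_def using True apex(1) W.refl level_apex by simp
    then have "1 \<le> card (cone_level j)" using fin card_gt_0_iff by (metis One_nat_def Suc_leI empty_iff)
    then show ?thesis using True X_level_root by simp
  next
    case False
    have "{x \<in> W. W.dp x = d + (j - 1)} \<subseteq> cone_level j"
    proof
      fix x assume x: "x \<in> {x \<in> W. W.dp x = d + (j - 1)}"
      then have "W.dp x < W.dp apex" using False j apex(2) by auto
      then have "R apex x" using below_apex_iff x by blast
      moreover have "level (W.dp x) = j" using x j unfolding level_def by auto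
      ultimately show "x \<in> cone_level j" using x unfolding cone_level_def by blast
    qed
    moreover have "1 < card {x \<in> W. W.dp x = d + (j - 1)}" using stack[of "j - 1"] False j by linarith
    ultimately have "1 < card (cone_level j)" using card_mono[OF fin] by (meson less_le_trans)
    moreover have "card (X_level j) \<le> 2"
      unfolding X_level_def using X.cyclic_level_card[OF X_cyclic] .
    ultimately show ?thesis by linarith
  qed
qed

definition collapse :: "'a \<Rightarrow> 'b" where
  "collapse y = (SOME g. g ` cone_level (level (W.dp y)) = X_level (level (W.dp y))) y"

lemma collapse_onto_level:
  assumes "1 \<le> j" "j \<le> X.dp r"
  shows "collapse ` cone_level j = X_level j"
proof -
  let ?g = "SOME g. g ` cone_level j = X_level j"
  obtain z where z: "z \<in> X_level j" using card_X_level_le_cone_level(1)[OF assms] by blast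
  have "finite (cone_level j)" "finite (X_level j)"
    unfolding cone_level_def X_level_def using W.finite X.finite by simp_all
  from ex_onto_if_card_le[OF this z card_X_level_le_cone_level(2)[OF assms]]
  have "\<exists>g. g ` cone_level j = X_level j" .
  then have "?g ` cone_level j = X_level j" by (rule someI_ex)
  moreover have "collapse ` cone_level j = ?g ` cone_level j"
  proof (rule image_cong)
    fix y assume "y \<in> cone_level j"
    then have "level (W.dp y) = j" unfolding cone_level_def by simp
    then show "collapse y = ?g y" unfolding collapse_def by (simp only:)
  qed simp
  ultimately show ?thesis by simp
qed

lemma collapse_level:
  assumes "y \<in> W" "R apex y"
  shows "collapse y \<in> X" "X.dp (collapse y) = level (W.dp y)"
proof -
  have "y \<in> cone_level (level (W.dp y))" using assms unfolding cone_level_def by simp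
  then have "collapse y \<in> X_level (level (W.dp y))"
    using collapse_onto_level level_range[OF assms] by blast
  then show "collapse y \<in> X" "X.dp (collapse y) = level (W.dp y)" unfolding X_level_def by simp_all
qed

lemma collapse_apex: "collapse apex = r"
proof -
  have "collapse apex \<in> X_level (X.dp r)"
    using collapse_level[OF apex(1) W.refl[OF apex(1)]] level_apex unfolding X_level_def by simp
  then show ?thesis using X_level_root by blast
qed

lemma collapse_mono:
  assumes y: "y \<in> W" "R apex y" and y': "y' \<in> W" "R y y'"
  shows "S (collapse y) (collapse y')"
proof (cases "y = y'")
  case True
  then show ?thesis using X.refl collapse_level(1)[OF y] by simp
next
  case False
  have y'_below: "R apex y'" using W.trans[OF apex(1) y(1) y'(1) y(2) y'(2)] .
  have "W.dp y' < W.dp y" using W.depth_less[OF y(1) y'(1) y'(2) False] .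
  then consider "level (W.dp y') < level (W.dp y)" | "level (W.dp y') = 1" "level (W.dp y) = 1"
    unfolding level_def by linarith
  then show ?thesis
  proof cases
    case 1
    then show ?thesis
      using X.cyclic_below_shallower[OF X_cyclic] collapse_level[OF y] collapse_level[OF y'(1) y'_below]
      by simp
  next
    case 2
    then have "collapse y \<in> X_level 1" "collapse y' \<in> X_level 1"
      using collapse_level[OF y] collapse_level[OF y'(1) y'_below] unfolding X_level_def by simp_all
    then have "collapse y = t" "collapse y' = t" using X_level_1 by blast+
    then show ?thesis using X.refl[OF top(1)] by simp
  qed
qed

lemma collapse_lift:
  assumes y: "y \<in> W" "R apex y" and z: "z \<in> X" "S (collapse y) z"
  shows "\<exists>y'\<in>W. R apex y' \<and> R y y' \<and> collapse y' = z"
proof (cases "z = collapse y")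
  case True
  then show ?thesis using y W.refl by blast
next
  case False
  then have less: "X.dp z < level (W.dp y)"
    using X.depth_less[OF collapse_level(1)[OF y] z(1) z(2)] collapse_level(2)[OF y] by simp
  have "z \<in> collapse ` cone_level (X.dp z)"
    using collapse_onto_level X_depth_range[OF z(1)] z(1) unfolding X_level_def by blast
  then obtain y' where y': "y' \<in> W" "R apex y'" "level (W.dp y') = X.dp z" "collapse y' = z"
    unfolding cone_level_def by blast
  with less have "W.dp y' < W.dp y"
    using level_mono[of "W.dp y" "W.dp y'"] by linarith
  then have "R y y'" using W.cyclic_below_shallower[OF W_cyclic y(1) y'(1)] by blast
  with y' show ?thesis by blast
qed

lemma p_morphism_collapse: "p_morphism {y \<in> W. R apex y} R X S collapse"
  unfolding p_morphism_def
proof (intro conjI ballI impI)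
  fix y z assume "y \<in> {y \<in> W. R apex y}" "z \<in> X" "S (collapse y) z"
  then show "\<exists>y'\<in>{y \<in> W. R apex y}. R y y' \<and> collapse y' = z"
    using collapse_lift by blast
qed (use collapse_level(1) collapse_mono in auto)

end

lemma stack_collapse_countermodel:
  assumes \<phi>: "\<phi> \<notin> Box" and Box: "Box \<subseteq> L" and fr: "frame_of L W R"
    and stack: "\<And>i. i < depth_in (countermodel \<phi>) (\<subseteq>) (root_theory \<phi>)
      \<Longrightarrow> 1 < card {x \<in> W. depth_in W R x = d + i}"
  shows "stack_collapse W R (countermodel \<phi>) (\<subseteq>) (root_theory \<phi>) (top_theory \<phi>) d"
proof (rule stack_collapse.intro[OF frame_of_finite_poset[OF fr] finite_poset_subset
      stack_collapse_axioms.intro])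
  show "finite (countermodel \<phi>)" using finite_countermodel[OF \<phi>] .
  show "cyclic W R" using cyclic_frame[OF fr Box] .
  show "cyclic (countermodel \<phi>) (\<subseteq>)" using cyclic_countermodel[OF \<phi>] .
  show "root_theory \<phi> \<in> countermodel \<phi>" "top_theory \<phi> \<in> countermodel \<phi>"
    using root_in_countermodel[OF \<phi>] top_in_countermodel[OF \<phi>] .
  show "root_theory \<phi> \<subseteq> z" "z \<subseteq> top_theory \<phi>" if "z \<in> countermodel \<phi>" for z
    using countermodel_prime[OF \<phi> that] by blast+
qed (use stack in blast)

lemma stack_lt_countermodel_depth:
  assumes \<phi>: "\<phi> \<notin> Box" "\<phi> \<in> L" and Box: "Box \<subseteq> L"
    and fr: "frame_of L W R" and k: "k_stack W R k"
  shows "k < depth_in (countermodel \<phi>) (\<subseteq>) (root_theory \<phi>)"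
proof (rule ccontr)
  assume "\<not> ?thesis"
  with k obtain d where "\<And>i. i < depth_in (countermodel \<phi>) (\<subseteq>) (root_theory \<phi>)
      \<Longrightarrow> 1 < card {x \<in> W. depth_in W R x = d + i}"
    unfolding k_stack_def depth_eq_depth_in by (meson le_less_trans not_less)
  then interpret stack_collapse W R "countermodel \<phi>" "(\<subseteq>)" "root_theory \<phi>" "top_theory \<phi>" d
    by (rule stack_collapse_countermodel[OF \<phi>(1) Box fr])
  let ?C = "{y \<in> W. R apex y}"
  have C: "upset W R ?C" using upset_successors[OF W.finite_poset_axioms apex(1)] .
  have "apex \<in> ?C" using apex(1) W.refl by blast
  let ?V = "\<lambda>n. {y \<in> ?C. Var n \<in> collapse y}"
  have "\<forall>n. upset W R (?V n)"
    using upset_p_morphism_preimage[OF C p_morphism_collapse] by blast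
  from frame_of_valid[OF fr \<phi>(2) this apex(1)] have "sat W R ?V apex \<phi>" .
  then have "\<phi> \<in> collapse apex"
    using sat_p_morphism_iff[OF C p_morphism_collapse countermodel_prime(1)[OF \<phi>(1)]
        witness_closed_countermodel[OF \<phi>(1)] subformulas_refl \<open>apex \<in> ?C\<close>] by blast
  with collapse_apex root_theory_maximal[OF \<phi>(1)] show False
    unfolding maximal_omitting_def by simp
qed

theorem mainTheorem15:
  fixes L' :: "fm set"
  assumes "si_logic L'"
    and "Box \<subset> L'"
    and "\<not> finite_depth L'"
  shows "\<exists>n. \<forall>W R. frame_of L' W R \<longrightarrow> stack_depth_le W R n"
proof -
  obtain \<phi> where \<phi>: "\<phi> \<notin> Box" "\<phi> \<in> L'" using assms(2) by blast
  have "stack_depth_le W R (depth_in (countermodel \<phi>) (\<subseteq>) (root_theory \<phi>))"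
    if "frame_of L' W R" for W R
    unfolding stack_depth_le_def
    using stack_lt_countermodel_depth[OF \<phi> _ that] assms(2) by (simp add: less_imp_le)
  then show ?thesis by blast
qed

end
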